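(* Let $\mathcal M=(N,\mathcal I)$ be a loopless matroid with rank function $r$ that contains $3h$ pairwise disjoint bases for some integer $h\ge1$, and let $S\subseteq N$ be a random set containing each element independently with probability $1/2$. Then $$\Pr\Big[|\mathrm{span}(D(S,h))\setminus S|\le \tfrac{|N|}{12}\Big]\le\exp\Big(-\tfrac{|N|}{144}\Big)\quad\text{and}\quad \Pr\Big[r(D(S,h))\le\tfrac{r(N)}{8}\Big]\le\exp\Big(-\tfrac{r(N)}{48}\Big).$$
   Context: $D(S,\lambda)=D_{\mathcal M}(S,\lambda)$ is the unique inclusion-wise maximal set among the maximizers of $|U|-\lambda r(U)$ over $U\subseteq S$. $\mathrm{span}(A)=\{e\in N: r(A\cup\{e\})=r(A)\}$. *)

theory Defs
  imports Complex_Main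
begin

definition matroid :: "'a set \<Rightarrow> ('a set \<Rightarrow> bool) \<Rightarrow> bool" where
  "matroid N indep \<longleftrightarrow>
     finite N \<and> indep {} \<and>
     (\<forall>I. indep I \<longrightarrow> I \<subseteq> N) \<and>
     (\<forall>I J. indep J \<and> I \<subseteq> J \<longrightarrow> indep I) \<and>
     (\<forall>I J. indep I \<and> indep J \<and> card I < card J \<longrightarrow> (\<exists>e\<in>J - I. indep (insert e I)))"

definition loopless :: "'a set \<Rightarrow> ('a set \<Rightarrow> bool) \<Rightarrow> bool" where
  "loopless N indep \<longleftrightarrow> (\<forall>e\<in>N. indep {e})"

definition mbasis :: "('a set \<Rightarrow> bool) \<Rightarrow> 'a set \<Rightarrow> bool" where
  "mbasis indep B \<longleftrightarrow> indep B \<and> (\<forall>I. indep I \<and> B \<subseteq> I \<longrightarrow> I = B)"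

definition mrank :: "('a set \<Rightarrow> bool) \<Rightarrow> 'a set \<Rightarrow> nat" where
  "mrank indep A = Max (card ` {I. I \<subseteq> A \<and> indep I})"

definition mspan :: "'a set \<Rightarrow> ('a set \<Rightarrow> bool) \<Rightarrow> 'a set \<Rightarrow> 'a set" where
  "mspan N indep A = {e\<in>N. mrank indep (A \<union> {e}) = mrank indep A}"

definition maximizers :: "('a set \<Rightarrow> bool) \<Rightarrow> 'a set \<Rightarrow> real \<Rightarrow> 'a set set" where
  "maximizers indep S lam =
     {U. U \<subseteq> S \<and> (\<forall>V. V \<subseteq> S \<longrightarrow>
        real (card V) - lam * real (mrank indep V) \<le> real (card U) - lam * real (mrank indep U))}"

definition Dset :: "('a set \<Rightarrow> bool) \<Rightarrow> 'a set \<Rightarrow> real \<Rightarrow> 'a set" where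
  "Dset indep S lam =
     (THE U. U \<in> maximizers indep S lam \<and> (\<forall>V\<in>maximizers indep S lam. U \<subseteq> V \<longrightarrow> V = U))"

text \<open>Probability of an event for S a uniformly random subset of N
  (each element independently with probability 1/2).\<close>
definition prob_half :: "'a set \<Rightarrow> ('a set \<Rightarrow> bool) \<Rightarrow> real" where
  "prob_half N P = real (card {S. S \<subseteq> N \<and> P S}) / 2 ^ card N"

end

theory Submission
  imports Defs
begin

text \<open>
  The surplus U \<mapsto> |U| - h r(U) is supermodular, so its maximizers on S are closed
  under union, D(S) is the largest of them, and D is monotone in S. Adding an element e
  to S raises the maximal surplus by at most 1, and not at all when e lies outside
  span(D(S)); here h \<ge> 1 and the integrality of the surplus are used.

  Fix an order on N and record the elements where membership in S disagrees with the
  prediction ``e is spanned by D of the part of S before e''. This code determines S,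
  since the prediction for e only depends on earlier elements. Its elements inside S
  are prediction failures, which cost a unit of surplus each, so there are at most
  h r(N) of them; those outside S lie in span(D(S)) - S. The 3h disjoint bases give
  3h r(N) \<le> |N|, so on the first event the code has at most 5|N|/12 elements, and a
  Chernoff bound counts such sets.

  For the second event let U be the union of the bases, |U| = 3h r(N). Each basis
  meets D(S) in at most r(D(S)) elements and |S - D(S)| \<le> h (r(N) - r(D(S))), so
  r(D(S)) \<le> r(N)/8 forces |S \<inter> U| \<le> 5|U|/12, and the same Chernoff bound applies
  inside U.
\<close>

section \<open>A binomial tail bound\<close>

lemma chernoff_factor_le:
  fixes a u :: nat
  assumes "12 * a \<le> 5 * u"
  shows "(7/5::real) ^ a * (6/7) ^ u \<le> exp (- real u / 144)"
proof -
  define x where "x = (7/5::real) ^ a * (6/7) ^ u"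
  have "x ^ Suc 11 = (7/5) ^ (12 * a) * (6/7) ^ (12 * u)"
    unfolding x_def by (simp add: power_mult_distrib power_mult[symmetric] mult.commute)
  also have "\<dots> \<le> (7/5) ^ (5 * u) * (6/7) ^ (12 * u)"
    using assms by (intro mult_right_mono power_increasing) auto
  also have "\<dots> = ((7/5) ^ 5 * (6/7) ^ 12) ^ u"
    by (simp add: power_mult power_mult_distrib)
  also have "\<dots> \<le> (1 + (-1/12)) ^ u"
    by (intro power_mono) (simp_all add: power_numeral_reduce)
  also have "\<dots> \<le> exp (-1/12) ^ u"
    by (intro power_mono exp_ge_add_one_self) simp
  also have "\<dots> = exp (- real u / 144) ^ Suc 11"
    by (simp flip: exp_of_nat_mult)
  finally have "x ^ Suc 11 \<le> exp (- real u / 144) ^ Suc 11" .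
  then show ?thesis unfolding x_def by (rule power_le_imp_le_base) simp
qed

text \<open>Chernoff's trick: weight the i-th binomial coefficient by (5/7)^i (7/5)^a \<ge> 1
  and sum the binomial expansion of (1 + 5/7)^u.\<close>

lemma sum_binomial_small_le:
  fixes u :: nat
  shows "(\<Sum>i\<in>{i. i \<le> u \<and> 12 * i \<le> 5 * u}. real (u choose i)) \<le> 2 ^ u * exp (- real u / 144)"
proof -
  define a where "a = 5 * u div 12"
  define I where "I = {i. i \<le> u \<and> 12 * i \<le> 5 * u}"
  have "(\<Sum>i\<in>I. real (u choose i)) \<le> (\<Sum>i\<in>I. real (u choose i) * (5/7) ^ i * (7/5) ^ a)"
  proof (rule sum_mono)
    fix i assume "i \<in> I"
    then have "(7/5::real) ^ i \<le> (7/5) ^ a" unfolding I_def a_def by (intro power_increasing) auto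
    then have "(5/7::real) ^ i * (7/5) ^ i \<le> (5/7) ^ i * (7/5) ^ a"
      by (intro mult_left_mono) auto
    then have "1 \<le> (5/7::real) ^ i * (7/5) ^ a"
      by (simp add: power_mult_distrib[symmetric])
    then show "real (u choose i) \<le> real (u choose i) * (5/7) ^ i * (7/5) ^ a"
      by (simp add: mult.assoc mult_le_cancel_left1)
  qed
  also have "\<dots> \<le> (\<Sum>i\<le>u. real (u choose i) * (5/7) ^ i * (7/5) ^ a)"
    by (rule sum_mono2) (auto simp: I_def)
  also have "\<dots> = (7/5) ^ a * (\<Sum>i\<le>u. real (u choose i) * (5/7) ^ i * 1 ^ (u - i))"
    by (simp add: sum_distrib_left algebra_simps)
  also have "\<dots> = (7/5) ^ a * (5/7 + 1) ^ u"
    using binomial_ring[of "5/7::real" 1 u] by simp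
  also have "\<dots> = 2 ^ u * ((7/5) ^ a * (6/7) ^ u)"
    by (simp add: power_mult_distrib[symmetric])
  also have "\<dots> \<le> 2 ^ u * exp (- real u / 144)"
    using chernoff_factor_le[of a u] unfolding a_def by simp
  finally show ?thesis unfolding I_def .
qed

lemma card_small_subsets_le:
  assumes "finite U"
  shows "real (card {R. R \<subseteq> U \<and> 12 * card R \<le> 5 * card U}) \<le> 2 ^ card U * exp (- real (card U) / 144)"
proof -
  define I where "I = {i. i \<le> card U \<and> 12 * i \<le> 5 * card U}"
  have "{R. R \<subseteq> U \<and> 12 * card R \<le> 5 * card U} = (\<Union>i\<in>I. {R. R \<subseteq> U \<and> card R = i})"
    unfolding I_def using assms by (auto intro: card_mono)
  moreover have "card (\<Union>i\<in>I. {R. R \<subseteq> U \<and> card R = i}) = (\<Sum>i\<in>I. card {R. R \<subseteq> U \<and> card R = i})"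
    by (rule card_UN_disjoint) (auto simp: I_def intro: finite_subset[of _ "Pow U"] assms)
  ultimately have "card {R. R \<subseteq> U \<and> 12 * card R \<le> 5 * card U} = (\<Sum>i\<in>I. card {R. R \<subseteq> U \<and> card R = i})"
    by simp
  also have "\<dots> = (\<Sum>i\<in>I. card U choose i)" using n_subsets[OF assms] by simp
  finally show ?thesis using sum_binomial_small_le[of "card U"] unfolding I_def by simp
qed

lemma card_subsets_restrict:
  assumes "finite N" "U \<subseteq> N"
  shows "card {S. S \<subseteq> N \<and> P (S \<inter> U)} = card {R. R \<subseteq> U \<and> P R} * 2 ^ (card N - card U)"
proof -
  have split: "(R \<union> Q) \<inter> U = R" "(R \<union> Q) - U = Q" if "R \<subseteq> U" "Q \<in> Pow (N - U)" for R Q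
    using that by blast+
  have "bij_betw (\<lambda>(R, Q). R \<union> Q) ({R. R \<subseteq> U \<and> P R} \<times> Pow (N - U)) {S. S \<subseteq> N \<and> P (S \<inter> U)}"
    by (rule bij_betw_byWitness[where f' = "\<lambda>S. (S \<inter> U, S - U)"]) (use assms(2) in \<open>auto simp: split\<close>)
  then have "card {S. S \<subseteq> N \<and> P (S \<inter> U)} = card {R. R \<subseteq> U \<and> P R} * card (Pow (N - U))"
    by (simp add: bij_betw_same_card[symmetric] card_cartesian_product)
  then show ?thesis using assms by (simp add: card_Pow card_Diff_subset finite_subset)
qed

lemma card_small_traces_le:
  assumes "finite N" "U \<subseteq> N"
  shows "real (card {S. S \<subseteq> N \<and> 12 * card (S \<inter> U) \<le> 5 * card U})
    \<le> 2 ^ card N * exp (- real (card U) / 144)"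
proof -
  have "real (card {S. S \<subseteq> N \<and> 12 * card (S \<inter> U) \<le> 5 * card U})
      = real (card {R. R \<subseteq> U \<and> 12 * card R \<le> 5 * card U}) * 2 ^ (card N - card U)"
    using card_subsets_restrict[OF assms, of "\<lambda>R. 12 * card R \<le> 5 * card U"] by simp
  also have "\<dots> \<le> 2 ^ card U * exp (- real (card U) / 144) * 2 ^ (card N - card U)"
    using card_small_subsets_le[OF finite_subset[OF assms(2,1)]] by (rule mult_right_mono) simp
  also have "\<dots> = 2 ^ card N * exp (- real (card U) / 144)"
    using card_mono[OF assms] by (simp add: power_add[symmetric])
  finally show ?thesis .
qed

lemma prob_half_le:
  assumes "real (card {S. S \<subseteq> N \<and> P S}) \<le> 2 ^ card N * c"
  shows "prob_half N P \<le> c"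
  using assms unfolding prob_half_def by (simp add: divide_le_eq mult.commute)

section \<open>Matroids and their rank function\<close>

locale finite_matroid =
  fixes N :: "'a set" and indep :: "'a set \<Rightarrow> bool"
  assumes matroid: "matroid N indep"
begin

abbreviation r :: "'a set \<Rightarrow> nat" where "r \<equiv> mrank indep"

lemma finite_ground: "finite N"
  using matroid unfolding matroid_def by blast

lemma indep_subset_ground: "indep I \<Longrightarrow> I \<subseteq> N"
  using matroid unfolding matroid_def by blast

lemma indep_empty: "indep {}"
  using matroid unfolding matroid_def by blast

lemma indep_subset: "indep J \<Longrightarrow> I \<subseteq> J \<Longrightarrow> indep I"
  using matroid unfolding matroid_def by blast

lemma indep_augment:
  "indep I \<Longrightarrow> indep J \<Longrightarrow> card I < card J \<Longrightarrow> \<exists>e\<in>J - I. indep (insert e I)"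
  using matroid unfolding matroid_def by blast

lemma indep_finite: "indep I \<Longrightarrow> finite I"
  using indep_subset_ground finite_ground finite_subset by blast

lemma finite_subset_ground: "S \<subseteq> N \<Longrightarrow> finite S"
  using finite_ground finite_subset by blast

lemma finite_indep_subsets: "finite {I. I \<subseteq> A \<and> indep I}"
  by (rule finite_subset[of _ "Pow N"]) (auto dest: indep_subset_ground simp: finite_ground)

lemma card_le_rank: "I \<subseteq> A \<Longrightarrow> indep I \<Longrightarrow> card I \<le> r A"
  unfolding mrank_def by (rule Max_ge) (use finite_indep_subsets in auto)

lemma rank_attained: obtains I where "I \<subseteq> A" "indep I" "card I = r A"
proof -
  have "r A \<in> card ` {I. I \<subseteq> A \<and> indep I}"
    unfolding mrank_def by (rule Max_in) (use finite_indep_subsets indep_empty in auto)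
  then show ?thesis using that by auto
qed

lemma rank_mono: "A \<subseteq> B \<Longrightarrow> r A \<le> r B"
  by (rule rank_attained[of A]) (metis card_le_rank order_trans)

lemma rank_le_card: "finite A \<Longrightarrow> r A \<le> card A"
  by (rule rank_attained[of A]) (metis card_mono)

lemma rank_empty: "r {} = 0"
  using rank_le_card[of "{}"] by simp

lemma indep_extend_to_rank:
  assumes "indep I" "I \<subseteq> X"
  shows "\<exists>J. I \<subseteq> J \<and> J \<subseteq> X \<and> indep J \<and> card J = r X"
  using assms
proof (induction "r X - card I" arbitrary: I rule: less_induct)
  case less
  show ?case
  proof (cases "card I < r X")
    case False
    then have "card I = r X" using card_le_rank[OF less.prems(2,1)] by linarith
    then show ?thesis using less.prems by blast
  next
    case True
    obtain K where K: "K \<subseteq> X" "indep K" "card K = r X" by (rule rank_attained)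
    then obtain e where e: "e \<in> K - I" "indep (insert e I)"
      using indep_augment[OF less.prems(1) K(2)] True by auto
    have "card (insert e I) = Suc (card I)"
      using e(1) indep_finite[OF less.prems(1)] by simp
    then have "r X - card (insert e I) < r X - card I" using True by linarith
    moreover have "insert e I \<subseteq> X" using e(1) K(1) less.prems(2) by blast
    ultimately obtain J where "insert e I \<subseteq> J" "J \<subseteq> X" "indep J" "card J = r X"
      using less.hyps[OF _ e(2)] by blast
    then show ?thesis by blast
  qed
qed

lemma rank_submodular: "r (A \<union> B) + r (A \<inter> B) \<le> r A + r B"
proof -
  obtain I where I: "I \<subseteq> A \<inter> B" "indep I" "card I = r (A \<inter> B)" by (rule rank_attained)
  then obtain J where J: "I \<subseteq> J" "J \<subseteq> A \<union> B" "indep J" "card J = r (A \<union> B)"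
    using indep_extend_to_rank[of I "A \<union> B"] by blast
  have fJ: "finite J" using J indep_finite by blast
  have "card (J \<inter> A) \<le> r A" "card (J \<inter> B) \<le> r B"
    using J by (auto intro!: card_le_rank intro: indep_subset)
  moreover have "card (J \<inter> A) + card (J \<inter> B) = card J + card (J \<inter> A \<inter> B)"
  proof -
    have "J \<inter> A \<union> J \<inter> B = J" using J(2) by blast
    then show ?thesis using card_Un_Int[of "J \<inter> A" "J \<inter> B"] fJ by (simp add: Int_ac)
  qed
  moreover have "card I \<le> card (J \<inter> A \<inter> B)"
    using I J fJ by (intro card_mono) auto
  ultimately show ?thesis using I J by linarith
qed

lemma mspan_mono: "e \<in> mspan N indep A \<Longrightarrow> A \<subseteq> B \<Longrightarrow> e \<in> mspan N indep B"
proof -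
  assume e: "e \<in> mspan N indep A" and AB: "A \<subseteq> B"
  have "B \<union> (A \<union> {e}) = B \<union> {e}" using AB by auto
  then have "r (B \<union> {e}) + r (B \<inter> (A \<union> {e})) \<le> r B + r (A \<union> {e})"
    using rank_submodular[of B "A \<union> {e}"] by simp
  moreover have "r A \<le> r (B \<inter> (A \<union> {e}))" using AB by (intro rank_mono) auto
  moreover have "r B \<le> r (B \<union> {e})" by (intro rank_mono) auto
  moreover have "e \<in> N" "r (A \<union> {e}) = r A" using e unfolding mspan_def by auto
  ultimately have "r (B \<union> {e}) = r B" by linarith
  then show ?thesis using \<open>e \<in> N\<close> unfolding mspan_def by simp
qed

lemma basis_card: "mbasis indep B \<Longrightarrow> card B = r N"
proof (rule ccontr)
  assume B: "mbasis indep B" and "card B \<noteq> r N"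
  moreover have "card B \<le> r N"
    using B indep_subset_ground card_le_rank unfolding mbasis_def by blast
  moreover obtain K where "K \<subseteq> N" "indep K" "card K = r N" by (rule rank_attained)
  ultimately obtain e where "e \<in> K - B" "indep (insert e B)"
    using indep_augment[of B K] unfolding mbasis_def by auto
  then show False using B unfolding mbasis_def by blast
qed

lemma card_Union_disjoint_bases:
  assumes "\<forall>i<m. mbasis indep (B i)" "\<forall>i<m. \<forall>j<m. i \<noteq> j \<longrightarrow> B i \<inter> B j = {}"
  shows "card (\<Union>i<m. B i) = m * r N"
proof -
  have "\<forall>i\<in>{..<m}. finite (B i)"
    using assms(1) indep_finite unfolding mbasis_def by blast
  then have "card (\<Union>i<m. B i) = (\<Sum>i<m. card (B i))"
    using assms(2) by (intro card_UN_disjoint) auto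
  also have "\<dots> = (\<Sum>i<m. r N)"
    using assms(1) basis_card by (intro sum.cong) auto
  finally show ?thesis by simp
qed

lemma card_inter_Union_indep_le:
  assumes "\<forall>i<m. indep (B i)"
  shows "card (A \<inter> (\<Union>i<m. B i)) \<le> m * r A"
proof -
  have "card (A \<inter> (\<Union>i<m. B i)) \<le> (\<Sum>i<m. card (A \<inter> B i))"
    unfolding Int_UN_distrib by (rule card_UN_le) simp
  also have "\<dots> \<le> (\<Sum>i<m. r A)"
  proof (rule sum_mono)
    fix i assume "i \<in> {..<m}"
    then have "indep (A \<inter> B i)" using assms indep_subset by blast
    then show "card (A \<inter> B i) \<le> r A" by (intro card_le_rank) auto
  qed
  finally show ?thesis by simp
qed

end

section \<open>Maximizers of the surplus\<close>

locale matroid_surplus = finite_matroid +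
  fixes h :: nat
begin

definition surplus :: "'a set \<Rightarrow> real" where
  "surplus V = real (card V) - real h * real (r V)"

abbreviation D :: "'a set \<Rightarrow> 'a set" where
  "D S \<equiv> Dset indep S (real h)"

lemma maximizers_iff:
  "U \<in> maximizers indep S (real h) \<longleftrightarrow> U \<subseteq> S \<and> (\<forall>V. V \<subseteq> S \<longrightarrow> surplus V \<le> surplus U)"
  unfolding maximizers_def surplus_def by auto

lemma surplus_supermodular:
  assumes "finite A" "finite B"
  shows "surplus A + surplus B \<le> surplus (A \<union> B) + surplus (A \<inter> B)"
proof -
  have "real (card A) + real (card B) = real (card (A \<union> B)) + real (card (A \<inter> B))"
    using card_Un_Int[OF assms] by (metis of_nat_add)
  moreover have "real (r (A \<union> B)) + real (r (A \<inter> B)) \<le> real (r A) + real (r B)"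
    using rank_submodular[of A B] by (metis of_nat_add of_nat_le_iff)
  then have "real h * (real (r (A \<union> B)) + real (r (A \<inter> B))) \<le> real h * (real (r A) + real (r B))"
    by (intro mult_left_mono) auto
  ultimately show ?thesis unfolding surplus_def by (simp add: algebra_simps)
qed

lemma maximizers_Un_right:
  assumes "S \<subseteq> S'" "S' \<subseteq> N"
    and A: "A \<in> maximizers indep S (real h)" and B: "B \<in> maximizers indep S' (real h)"
  shows "A \<union> B \<in> maximizers indep S' (real h)"
proof -
  have AS: "A \<subseteq> S" and BS: "B \<subseteq> S'" using A B maximizers_iff by auto
  have "finite A" "finite B"
    using AS BS assms(1,2) finite_subset_ground by (meson order_trans)+
  then have "surplus A + surplus B \<le> surplus (A \<union> B) + surplus (A \<inter> B)"
    by (rule surplus_supermodular)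
  moreover have "surplus (A \<inter> B) \<le> surplus A"
    using A AS unfolding maximizers_iff by (meson inf_le1 order_trans)
  ultimately have "surplus B \<le> surplus (A \<union> B)" by linarith
  moreover have "A \<union> B \<subseteq> S'" using AS BS assms(1) by blast
  ultimately show ?thesis using B unfolding maximizers_iff by (meson order_trans)
qed

lemma maximizers_nonempty:
  assumes "S \<subseteq> N"
  shows "maximizers indep S (real h) \<noteq> {}"
proof -
  have fin: "finite (surplus ` Pow S)"
    using finite_subset_ground[OF assms] by (intro finite_imageI) simp
  have "Max (surplus ` Pow S) \<in> surplus ` Pow S"
    using fin by (rule Max_in) blast
  then obtain U where U: "U \<in> Pow S" "surplus U = Max (surplus ` Pow S)" by auto
  have "surplus V \<le> surplus U" if "V \<subseteq> S" for V
    unfolding U(2) using fin that by (intro Max_ge) blast+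
  then have "U \<in> maximizers indep S (real h)"
    using U(1) unfolding maximizers_iff by simp
  then show ?thesis by blast
qed

lemma Union_maximizers_in:
  assumes "S \<subseteq> N"
  shows "\<Union>(maximizers indep S (real h)) \<in> maximizers indep S (real h)"
proof -
  have "\<Union>F \<in> maximizers indep S (real h)"
    if "finite F" "F \<noteq> {}" "F \<subseteq> maximizers indep S (real h)" for F
    using that
    by (induction F rule: finite_ne_induct) (simp_all add: maximizers_Un_right[OF subset_refl assms])
  moreover have "maximizers indep S (real h) \<subseteq> Pow S" by (auto simp: maximizers_iff)
  then have "finite (maximizers indep S (real h))"
    using finite_subset_ground[OF assms] by (simp add: finite_subset)
  ultimately show ?thesis using maximizers_nonempty[OF assms] by blast
qed

lemma Dset_eq_Union_maximizers:
  assumes "S \<subseteq> N"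
  shows "D S = \<Union>(maximizers indep S (real h))"
  unfolding Dset_def
proof (rule the_equality)
  fix U assume "U \<in> maximizers indep S (real h) \<and>
    (\<forall>V\<in>maximizers indep S (real h). U \<subseteq> V \<longrightarrow> V = U)"
  then show "U = \<Union>(maximizers indep S (real h))"
    using Union_maximizers_in[OF assms] by blast
qed (use Union_maximizers_in[OF assms] in blast)

lemma Dset_in_maximizers: "S \<subseteq> N \<Longrightarrow> D S \<in> maximizers indep S (real h)"
  using Dset_eq_Union_maximizers Union_maximizers_in by simp

lemma Dset_subset: "S \<subseteq> N \<Longrightarrow> D S \<subseteq> S"
  using Dset_in_maximizers maximizers_iff by blast

lemma surplus_le_Dset: "S \<subseteq> N \<Longrightarrow> V \<subseteq> S \<Longrightarrow> surplus V \<le> surplus (D S)"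
  using Dset_in_maximizers maximizers_iff by blast

lemma Dset_mono:
  assumes "S \<subseteq> S'" "S' \<subseteq> N"
  shows "D S \<subseteq> D S'"
proof -
  have "D S \<union> D S' \<in> maximizers indep S' (real h)"
    using assms Dset_in_maximizers maximizers_Un_right by (meson order_trans)
  then show ?thesis using Dset_eq_Union_maximizers[OF assms(2)] by blast
qed

lemma Dset_empty: "D {} = {}"
  using Dset_subset[of "{}"] by simp

lemma surplus_less_imp_le_diff_one:
  assumes "surplus A < surplus B"
  shows "surplus A \<le> surplus B - 1"
proof -
  define a b where "a = int (card A) - int h * int (r A)" and "b = int (card B) - int h * int (r B)"
  have "surplus A = of_int a" "surplus B = of_int b" unfolding a_def b_def surplus_def by simp_all
  then have "a < b" using assms by simp
  then have "a \<le> b - 1" by simp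
  then have "(of_int a :: real) \<le> of_int b - 1" by linarith
  then show ?thesis using \<open>surplus A = of_int a\<close> \<open>surplus B = of_int b\<close> by simp
qed

lemma surplus_Dset_insert_le:
  assumes S: "S \<subseteq> N" and e: "e \<in> N"
  shows "surplus (D (insert e S)) \<le> surplus (D S) + 1"
proof -
  define Y where "Y = D (insert e S) - {e}"
  have "D (insert e S) \<subseteq> insert e S" using S e by (intro Dset_subset) blast
  then have sub: "D (insert e S) \<subseteq> insert e Y" "Y \<subseteq> S" unfolding Y_def by blast+
  have fin: "finite Y" using finite_subset_ground S sub(2) by blast
  have "card (D (insert e S)) \<le> card (insert e Y)"
    using fin sub(1) by (intro card_mono) auto
  also have "\<dots> \<le> card Y + 1" using fin by (simp add: card_insert_if)
  finally have "card (D (insert e S)) \<le> card Y + 1" .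
  moreover have "r Y \<le> r (D (insert e S))" unfolding Y_def by (intro rank_mono) blast
  then have "real h * real (r Y) \<le> real h * real (r (D (insert e S)))"
    by (intro mult_left_mono) auto
  ultimately have "surplus (D (insert e S)) \<le> surplus Y + 1"
    unfolding surplus_def by linarith
  also have "surplus Y \<le> surplus (D S)" using surplus_le_Dset[OF S sub(2)] .
  finally show ?thesis by simp
qed

lemma mem_Dset_insert_if_surplus_less:
  assumes "S \<subseteq> N" "e \<in> N" "surplus (D S) < surplus (D (insert e S))"
  shows "e \<in> D (insert e S)"
proof (rule ccontr)
  assume "e \<notin> D (insert e S)"
  moreover have "D (insert e S) \<subseteq> insert e S" using assms(1,2) by (intro Dset_subset) blast
  ultimately have "D (insert e S) \<subseteq> S" by blast
  then show False using surplus_le_Dset[OF assms(1), of "D (insert e S)"] assms(3) by linarith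
qed

lemma surplus_Dset_insert_unspanned:
  assumes "1 \<le> h" and S: "S \<subseteq> N" and e: "e \<in> N" "e \<notin> mspan N indep (D S)"
  shows "surplus (D (insert e S)) \<le> surplus (D S)"
proof (rule ccontr)
  define D' where "D' = D (insert e S)"
  assume "\<not> surplus (D (insert e S)) \<le> surplus (D S)"
  then have gt: "surplus (D S) < surplus D'" unfolding D'_def by simp
  then have "e \<in> D'" unfolding D'_def by (rule mem_Dset_insert_if_surplus_less[OF S e(1)])
  have eS: "insert e S \<subseteq> N" using S e by blast
  then have D'_sub: "D' \<subseteq> insert e S" unfolding D'_def by (rule Dset_subset)
  then have "finite D'" using eS finite_subset_ground by (meson finite_subset)
  define Y where "Y = D' - {e}"
  have Y_sub: "Y \<subseteq> S" using D'_sub unfolding Y_def by blast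
  have D'_eq: "D' = insert e Y" and "e \<notin> Y" using \<open>e \<in> D'\<close> unfolding Y_def by blast+
  then have card_D': "card D' = card Y + 1" using \<open>finite D'\<close> by simp
  have "r Y \<le> r D'" unfolding D'_eq by (intro rank_mono) blast
  moreover have "r Y \<ge> r D'"
  proof (rule ccontr)
    assume "\<not> r D' \<le> r Y"
    then have "real h * (real (r Y) + 1) \<le> real h * real (r D')"
      by (intro mult_left_mono) auto
    then have "real h * real (r Y) + real h \<le> real h * real (r D')" by (simp add: algebra_simps)
    moreover have "1 \<le> real h" using assms(1) by simp
    ultimately have "surplus D' \<le> surplus Y" using card_D' unfolding surplus_def by simp
    then show False using surplus_le_Dset[OF S Y_sub] gt by linarith
  qed
  ultimately have rank_eq: "r Y = r D'" by simp
  have "surplus (D S) \<le> surplus D' - 1" using surplus_less_imp_le_diff_one[OF gt] .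
  also have "surplus D' - 1 = surplus Y" using card_D' rank_eq unfolding surplus_def by simp
  finally have "surplus V \<le> surplus Y" if "V \<subseteq> S" for V
    using surplus_le_Dset[OF S that] by linarith
  then have "Y \<in> maximizers indep S (real h)" using Y_sub unfolding maximizers_iff by blast
  then have "Y \<subseteq> D S" using Dset_eq_Union_maximizers[OF S] by blast
  moreover have "e \<in> mspan N indep Y" using e(1) rank_eq unfolding D'_eq mspan_def by simp
  ultimately show False using mspan_mono e(2) by blast
qed

lemma card_diff_Dset_le:
  assumes "S \<subseteq> N"
  shows "real (card (S - D S)) \<le> real h * (real (r S) - real (r (D S)))"
proof -
  have "finite S" using finite_subset_ground[OF assms] .
  then have "card (S - D S) = card S - card (D S)" "card (D S) \<le> card S"
    using Dset_subset[OF assms] by (auto simp: card_Diff_subset finite_subset card_mono)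
  moreover have "surplus S \<le> surplus (D S)" using surplus_le_Dset[OF assms subset_refl] .
  ultimately show ?thesis unfolding surplus_def by (simp add: of_nat_diff algebra_simps)
qed

lemma card_inter_Union_indep_le_Dset:
  assumes "S \<subseteq> N" "\<forall>i<m. indep (B i)"
  shows "real (card (S \<inter> (\<Union>i<m. B i)))
    \<le> real m * real (r (D S)) + real h * (real (r N) - real (r (D S)))"
proof -
  have fin: "finite S" using finite_subset_ground[OF assms(1)] .
  have "S \<inter> (\<Union>i<m. B i) \<subseteq> D S \<inter> (\<Union>i<m. B i) \<union> (S - D S)" by blast
  then have "card (S \<inter> (\<Union>i<m. B i)) \<le> card (D S \<inter> (\<Union>i<m. B i) \<union> (S - D S))"
    using fin Dset_subset[OF assms(1)] by (intro card_mono) (auto intro: finite_subset)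
  also have "\<dots> \<le> card (D S \<inter> (\<Union>i<m. B i)) + card (S - D S)" by (rule card_Un_le)
  also have "\<dots> \<le> m * r (D S) + card (S - D S)"
    using card_inter_Union_indep_le[OF assms(2)] by simp
  finally have "real (card (S \<inter> (\<Union>i<m. B i))) \<le> real m * real (r (D S)) + real (card (S - D S))"
    by (metis of_nat_add of_nat_le_iff of_nat_mult)
  moreover have "real h * real (r S) \<le> real h * real (r N)"
    using rank_mono[OF assms(1)] by (intro mult_left_mono) auto
  ultimately show ?thesis using card_diff_Dset_le[OF assms(1)] by (simp add: algebra_simps)
qed

end

section \<open>Encoding random sets\<close>

locale ordered_matroid_surplus = matroid_surplus +
  fixes idx :: "'a \<Rightarrow> nat"
  assumes idx_bij: "bij_betw idx N {0..<card N}"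
begin

definition initial :: "'a set \<Rightarrow> nat \<Rightarrow> 'a set" where
  "initial S m = {e\<in>S. idx e < m}"

definition spanned_before :: "'a set \<Rightarrow> 'a \<Rightarrow> bool" where
  "spanned_before S e \<longleftrightarrow> e \<in> mspan N indep (D (initial S (idx e)))"

definition code :: "'a set \<Rightarrow> 'a set" where
  "code S = {e\<in>N. (e \<in> S) \<noteq> spanned_before S e}"

lemma idx_less_card: "e \<in> N \<Longrightarrow> idx e < card N"
  using idx_bij unfolding bij_betw_def by auto

lemma initial_card_ground: "S \<subseteq> N \<Longrightarrow> initial S (card N) = S"
  unfolding initial_def using idx_less_card by blast

lemma initial_Suc_insert:
  assumes "S \<subseteq> N" "e \<in> S" "idx e = m"
  shows "initial S (Suc m) = insert e (initial S m)"
proof -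
  have inj: "inj_on idx N" using idx_bij by (rule bij_betw_imp_inj_on)
  have "x = e" if "x \<in> S" "idx x = m" for x
    using inj_onD[OF inj, of x e] assms that by blast
  then show ?thesis using assms(2,3) unfolding initial_def less_Suc_eq by blast
qed

lemma initial_Suc_absent: "\<forall>e\<in>S. idx e \<noteq> m \<Longrightarrow> initial S (Suc m) = initial S m"
  unfolding initial_def by (auto simp: less_Suc_eq)

lemma code_inj: "inj_on code (Pow N)"
proof (rule inj_onI)
  fix S S' assume S: "S \<in> Pow N" and S': "S' \<in> Pow N" and eq: "code S = code S'"
  have "initial S m = initial S' m" for m
  proof (induction m)
    case 0
    then show ?case unfolding initial_def by simp
  next
    case (Suc m)
    have "x \<in> S \<longleftrightarrow> x \<in> S'" if "x \<in> N" "idx x = m" for x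
    proof -
      have "spanned_before S x \<longleftrightarrow> spanned_before S' x"
        using Suc.IH that(2) unfolding spanned_before_def by simp
      moreover have "x \<in> code S \<longleftrightarrow> x \<in> code S'" using eq by simp
      ultimately show ?thesis using that(1) unfolding code_def by blast
    qed
    then show ?case
      using Suc.IH S S' unfolding initial_def less_Suc_eq by blast
  qed
  then show "S = S'" using S S' initial_card_ground by (metis PowD)
qed

lemma card_unspanned_initial_le:
  assumes "1 \<le> h" "S \<subseteq> N"
  shows "real (card {e\<in>initial S m. \<not> spanned_before S e}) + surplus (D (initial S m))
    \<le> real (card (initial S m))"
proof (induction m)
  case 0
  then show ?case unfolding initial_def surplus_def using Dset_empty rank_empty by simp
next
  case (Suc m)
  show ?case
  proof (cases "\<exists>e\<in>S. idx e = m")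
    case False
    then show ?thesis using Suc.IH initial_Suc_absent by simp
  next
    case True
    then obtain e where e: "e \<in> S" "idx e = m" by blast
    define I where "I = initial S m"
    have I_Suc: "initial S (Suc m) = insert e I"
      unfolding I_def using initial_Suc_insert[OF assms(2) e] .
    have "e \<notin> I" "finite I" "I \<subseteq> N" "e \<in> N"
      using e assms(2) finite_subset_ground unfolding I_def initial_def by auto
    then have card_I: "card (insert e I) = card I + 1" by simp
    have before_e: "initial S (idx e) = I" unfolding I_def e(2) ..
    show ?thesis
    proof (cases "spanned_before S e")
      case True
      then have "{x\<in>insert e I. \<not> spanned_before S x} = {x\<in>I. \<not> spanned_before S x}" by auto
      moreover have "surplus (D (insert e I)) \<le> surplus (D I) + 1"
        using surplus_Dset_insert_le \<open>I \<subseteq> N\<close> \<open>e \<in> N\<close> .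
      ultimately show ?thesis using Suc.IH card_I unfolding I_Suc I_def by simp
    next
      case False
      then have "{x\<in>insert e I. \<not> spanned_before S x} = insert e {x\<in>I. \<not> spanned_before S x}" by auto
      moreover have "card (insert e {x\<in>I. \<not> spanned_before S x}) = card {x\<in>I. \<not> spanned_before S x} + 1"
        using \<open>e \<notin> I\<close> \<open>finite I\<close> by simp
      moreover have "surplus (D (insert e I)) \<le> surplus (D I)"
        using surplus_Dset_insert_unspanned[OF assms(1) \<open>I \<subseteq> N\<close> \<open>e \<in> N\<close>] False
        unfolding spanned_before_def before_e by blast
      ultimately show ?thesis using Suc.IH card_I unfolding I_Suc I_def by simp
    qed
  qed
qed

lemma card_unspanned_le:
  assumes "1 \<le> h" "S \<subseteq> N"
  shows "real (card {e\<in>S. \<not> spanned_before S e}) \<le> real h * real (r N)"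
proof -
  have "real (card {e\<in>S. \<not> spanned_before S e}) + surplus (D S) \<le> real (card S)"
    using card_unspanned_initial_le[OF assms, of "card N"] initial_card_ground[OF assms(2)] by simp
  moreover have "surplus S \<le> surplus (D S)" using surplus_le_Dset[OF assms(2) subset_refl] .
  moreover have "real h * real (r S) \<le> real h * real (r N)"
    using rank_mono[OF assms(2)] by (intro mult_left_mono) auto
  ultimately show ?thesis unfolding surplus_def by linarith
qed

lemma spanned_before_outside_subset:
  assumes "S \<subseteq> N"
  shows "{e\<in>N - S. spanned_before S e} \<subseteq> mspan N indep (D S) - S"
proof
  fix e assume e: "e \<in> {e\<in>N - S. spanned_before S e}"
  have "D (initial S (idx e)) \<subseteq> D S"
    using assms by (intro Dset_mono) (auto simp: initial_def)
  then show "e \<in> mspan N indep (D S) - S"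
    using e mspan_mono unfolding spanned_before_def by blast
qed

lemma card_code_le:
  assumes "1 \<le> h" "S \<subseteq> N"
  shows "real (card (code S)) \<le> real (card (mspan N indep (D S) - S)) + real h * real (r N)"
proof -
  have "code S = {e\<in>N - S. spanned_before S e} \<union> {e\<in>S. \<not> spanned_before S e}"
    unfolding code_def using assms(2) by blast
  then have "card (code S) \<le> card {e\<in>N - S. spanned_before S e} + card {e\<in>S. \<not> spanned_before S e}"
    by (simp add: card_Un_le)
  also have "card {e\<in>N - S. spanned_before S e} \<le> card (mspan N indep (D S) - S)"
  proof (rule card_mono)
    show "finite (mspan N indep (D S) - S)" using finite_ground unfolding mspan_def by simp
  qed (rule spanned_before_outside_subset[OF assms(2)])
  finally show ?thesis using card_unspanned_le[OF assms] by linarith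
qed

end

section \<open>The two probability bounds\<close>

context matroid_surplus
begin

lemma prob_span_deficit_le:
  assumes "1 \<le> h" "3 * h * r N \<le> card N"
  shows "prob_half N (\<lambda>S. real (card (mspan N indep (D S) - S)) \<le> real (card N) / 12)
    \<le> exp (- real (card N) / 144)"
proof (rule prob_half_le)
  obtain idx where "bij_betw idx N {0..<card N}" using ex_bij_betw_finite_nat finite_ground by blast
  then interpret ordered_matroid_surplus N indep h idx by unfold_locales
  define E where "E = {S. S \<subseteq> N \<and> real (card (mspan N indep (D S) - S)) \<le> real (card N) / 12}"
  define T where "T = {R. R \<subseteq> N \<and> 12 * card R \<le> 5 * card N}"
  have "code ` E \<subseteq> T"
  proof (rule image_subsetI)
    fix S assume "S \<in> E"
    then have S: "S \<subseteq> N" "real (card (mspan N indep (D S) - S)) \<le> real (card N) / 12"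
      unfolding E_def by simp_all
    have "real (card (code S)) \<le> real (card N) / 12 + real h * real (r N)"
      using card_code_le[OF assms(1) S(1)] S(2) by linarith
    moreover have "real (3 * h * r N) \<le> real (card N)"
      using assms(2) by (simp only: of_nat_le_iff)
    ultimately have "12 * card (code S) \<le> 5 * card N" by simp
    moreover have "code S \<subseteq> N" unfolding code_def by blast
    ultimately show "code S \<in> T" unfolding T_def by blast
  qed
  moreover have "inj_on code E"
    using code_inj by (rule inj_on_subset) (simp add: E_def subset_eq)
  moreover have "finite T"
    unfolding T_def using finite_ground by (simp add: finite_subset[of _ "Pow N"] subset_eq)
  ultimately have "card E \<le> card T" by (metis card_inj_on_le)
  then show "real (card E) \<le> 2 ^ card N * exp (- real (card N) / 144)"
    using card_small_subsets_le[OF finite_ground] unfolding T_def by linarith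
qed

lemma card_inter_bases_le_if_rank_Dset_small:
  assumes "S \<subseteq> N" "\<forall>i<3*h. mbasis indep (B i)"
    "\<forall>i<3*h. \<forall>j<3*h. i \<noteq> j \<longrightarrow> B i \<inter> B j = {}"
    "real (r (D S)) \<le> real (r N) / 8"
  shows "12 * card (S \<inter> (\<Union>i<3*h. B i)) \<le> 5 * card (\<Union>i<3*h. B i)"
proof -
  have "\<forall>i<3*h. indep (B i)" using assms(2) unfolding mbasis_def by blast
  then have "real (card (S \<inter> (\<Union>i<3*h. B i)))
      \<le> real (3 * h) * real (r (D S)) + real h * (real (r N) - real (r (D S)))"
    by (rule card_inter_Union_indep_le_Dset[OF assms(1)])
  also have "\<dots> = real h * real (r N) + 2 * real h * real (r (D S))" by (simp add: algebra_simps)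
  also have "\<dots> \<le> real h * real (r N) + 2 * real h * (real (r N) / 8)"
    using assms(4) by (intro add_left_mono mult_left_mono) auto
  also have "\<dots> = 5 * real (card (\<Union>i<3*h. B i)) / 12"
    unfolding card_Union_disjoint_bases[OF assms(2,3)] by simp
  finally have "real (12 * card (S \<inter> (\<Union>i<3*h. B i))) \<le> real (5 * card (\<Union>i<3*h. B i))"
    by simp
  then show ?thesis by (simp only: of_nat_le_iff)
qed

lemma prob_rank_Dset_small_le:
  assumes "1 \<le> h" "\<forall>i<3*h. mbasis indep (B i)"
    "\<forall>i<3*h. \<forall>j<3*h. i \<noteq> j \<longrightarrow> B i \<inter> B j = {}"
  shows "prob_half N (\<lambda>S. real (r (D S)) \<le> real (r N) / 8) \<le> exp (- real (r N) / 48)"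
proof (rule prob_half_le)
  define U where "U = (\<Union>i<3*h. B i)"
  have "U \<subseteq> N" unfolding U_def using assms(2) indep_subset_ground unfolding mbasis_def by blast
  define T where "T = {S. S \<subseteq> N \<and> 12 * card (S \<inter> U) \<le> 5 * card U}"
  have "{S. S \<subseteq> N \<and> real (r (D S)) \<le> real (r N) / 8} \<subseteq> T"
    unfolding T_def U_def using card_inter_bases_le_if_rank_Dset_small[OF _ assms(2,3)] by blast
  moreover have "finite T" unfolding T_def using finite_ground by (simp add: finite_subset[of _ "Pow N"] subset_eq)
  ultimately have "real (card {S. S \<subseteq> N \<and> real (r (D S)) \<le> real (r N) / 8}) \<le> real (card T)"
    by (simp only: of_nat_le_iff card_mono)
  also have "\<dots> \<le> 2 ^ card N * exp (- real (card U) / 144)"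
    unfolding T_def by (rule card_small_traces_le[OF finite_ground \<open>U \<subseteq> N\<close>])
  also have "\<dots> \<le> 2 ^ card N * exp (- real (r N) / 48)"
  proof -
    have "real (r N) \<le> real h * real (r N)" using assms(1) by (simp add: mult_le_cancel_right1)
    then show ?thesis unfolding U_def card_Union_disjoint_bases[OF assms(2,3)] by simp
  qed
  finally show "real (card {S. S \<subseteq> N \<and> real (r (D S)) \<le> real (r N) / 8})
      \<le> 2 ^ card N * exp (- real (r N) / 48)" .
qed

end

theorem theorem5p1:
  fixes N :: "'a set" and indep :: "'a set \<Rightarrow> bool" and h :: nat
  assumes "matroid N indep"
    and "loopless N indep"
    and "h \<ge> 1"
    and "\<exists>B :: nat \<Rightarrow> 'a set. (\<forall>i<3*h. mbasis indep (B i)) \<and>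
           (\<forall>i<3*h. \<forall>j<3*h. i \<noteq> j \<longrightarrow> B i \<inter> B j = {})"
  shows "prob_half N (\<lambda>S. real (card (mspan N indep (Dset indep S (real h)) - S)) \<le> real (card N) / 12)
           \<le> exp (- real (card N) / 144)
       \<and> prob_half N (\<lambda>S. real (mrank indep (Dset indep S (real h))) \<le> real (mrank indep N) / 8)
           \<le> exp (- real (mrank indep N) / 48)"
proof -
  interpret matroid_surplus N indep h using assms(1) by unfold_locales
  obtain B where bases: "\<forall>i<3*h. mbasis indep (B i)"
    and disjoint: "\<forall>i<3*h. \<forall>j<3*h. i \<noteq> j \<longrightarrow> B i \<inter> B j = {}"
    using assms(4) by blast
  have "(\<Union>i<3*h. B i) \<subseteq> N" using bases indep_subset_ground unfolding mbasis_def by blast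
  then have "3 * h * r N \<le> card N"
    using card_mono[OF finite_ground] card_Union_disjoint_bases[OF bases disjoint] by metis
  then show ?thesis
    using prob_span_deficit_le[OF assms(3)] prob_rank_Dset_small_le[OF assms(3) bases disjoint]
    by blast
qed

end
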